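(* Let $G$, $\widehat{D}$, $\mathcal{C}$, $\mathbf{H}_d$ and $D$ be as in the context. If $\widehat{D}$ is a chainable distance function, then the EC-distance $D:G\to\mathbb{R}_+$ has minima only on the curve $\mathcal{C}$ (i.e., no point $\mathbf{B}\notin\mathcal{C}$ is a local minimum of $D$). Furthermore, all these minima are global.
   Context: $G$ is a connected matrix Lie group of $n\times n$ real matrices of dimension $m$, with Lie algebra $\mathfrak{g}$, basis $\mathbf{E}_1,\dots,\mathbf{E}_m$, and $S(\boldsymbol{\zeta})=\sum_k\zeta_k\mathbf{E}_k$. For $f:G\to\mathbb{R}$, $\mathrm{L}[f](\mathbf{G})$ is the row vector with $j$-th entry $\lim_{\epsilon\to0}\frac1\epsilon(f(\exp(S(\mathbf{e}_j)\epsilon)\mathbf{G})-f(\mathbf{G}))$; partial versions $\mathrm{L}_{\mathbf{V}},\mathrm{L}_{\mathbf{W}}$ are defined for two-argument functions; differentiability at a point means these limits exist and are continuous there. An EE-distance function is $\widehat{D}:G\times G\to\mathbb{R}_+$ with: (a) $\widehat{D}(\mathbf{V},\mathbf{W})\ge0$, $=0$ iff $\mathbf{V}=\mathbf{W}$; (b) differentiable in both arguments almost everywhere, with some $D_{\min,\mathcal{C}}>0$ such that the derivatives exist whenever $0<\widehat{D}<D_{\min,\mathcal{C}}$, and where a partial $\mathrm{L}$-derivative does not exist all its directional limits exist and are bounded. A path generating function is $\Phi:[0,1]\times G\times G\to G$, differentiable in $\sigma$, with $\Phi(0,\mathbf{V},\mathbf{W})=\mathbf{V}$, $\Phi(1,\mathbf{V},\mathbf{W})=\mathbf{W}$.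 $\widehat{D}$ is chainable if it is an EE-distance and there exists a path generating function $\Phi$ with $\widehat{D}(\mathbf{V},\mathbf{W})=\widehat{D}(\mathbf{V},\Phi(\sigma,\mathbf{V},\mathbf{W}))+\widehat{D}(\Phi(\sigma,\mathbf{V},\mathbf{W}),\mathbf{W})$ for all $\mathbf{V},\mathbf{W}\in G$, $\sigma\in[0,1]$. $\mathcal{C}$ is the image of a differentiable map $\mathbf{H}_d:[0,1]\to G$ without self-intersections, and the EC-distance is $D(\mathbf{H})\triangleq\min_{s\in[0,1]}\widehat{D}(\mathbf{H},\mathbf{H}_d(s))$. *)

theory Defs
  imports "HOL-Analysis.Analysis"
begin

type_synonym 'n rmat = "real^'n^'n"

fun mpow :: "'n::finite rmat \<Rightarrow> nat \<Rightarrow> 'n rmat" where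
  "mpow A 0 = mat 1"
| "mpow A (Suc k) = A ** mpow A k"

definition mexp :: "'n::finite rmat \<Rightarrow> 'n rmat" where
  "mexp A = (\<Sum>k. (1 / fact k) *\<^sub>R mpow A k)"

definition matrix_lie_group :: "'n::finite rmat set \<Rightarrow> bool" where
  "matrix_lie_group G \<longleftrightarrow>
     G \<subseteq> {A. invertible A} \<and> mat 1 \<in> G \<and>
     (\<forall>A\<in>G. \<forall>B\<in>G. A ** B \<in> G) \<and> (\<forall>A\<in>G. matrix_inv A \<in> G) \<and>
     closedin (top_of_set {A. invertible A}) G"

definition lie_algebra :: "'n::finite rmat set \<Rightarrow> 'n rmat set" where
  "lie_algebra G = {X. \<forall>t::real. mexp (t *\<^sub>R X) \<in> G}"

text \<open>The basis E_1..E_m of the Lie algebra is indexed by a finite type 'm, so m = CARD('m).\<close>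
definition lie_basis :: "'n::finite rmat set \<Rightarrow> ('m::finite \<Rightarrow> 'n rmat) \<Rightarrow> bool" where
  "lie_basis G E \<longleftrightarrow> inj E \<and> independent (range E) \<and> span (range E) = lie_algebra G"

definition Smap :: "('m::finite \<Rightarrow> 'n::finite rmat) \<Rightarrow> real^'m \<Rightarrow> 'n rmat" where
  "Smap E \<zeta> = (\<Sum>k\<in>UNIV. (\<zeta> $ k) *\<^sub>R E k)"

definition Lquot :: "('m::finite \<Rightarrow> 'n::finite rmat) \<Rightarrow> ('n rmat \<Rightarrow> real) \<Rightarrow> 'n rmat \<Rightarrow> real^'m \<Rightarrow> real \<Rightarrow> real" where
  "Lquot E f X \<zeta> \<epsilon> = (f (mexp (\<epsilon> *\<^sub>R Smap E \<zeta>) ** X) - f X) / \<epsilon>"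

definition L_exists :: "('m::finite \<Rightarrow> 'n::finite rmat) \<Rightarrow> ('n rmat \<Rightarrow> real) \<Rightarrow> 'n rmat \<Rightarrow> bool" where
  "L_exists E f X \<longleftrightarrow> (\<forall>j. \<exists>l. (Lquot E f X (axis j 1) \<longlongrightarrow> l) (at 0))"

definition Lder :: "('m::finite \<Rightarrow> 'n::finite rmat) \<Rightarrow> ('n rmat \<Rightarrow> real) \<Rightarrow> 'n rmat \<Rightarrow> real^'m" where
  "Lder E f X = (\<chi> j. Lim (at 0) (Lquot E f X (axis j 1)))"

definition LderV :: "('m::finite \<Rightarrow> 'n::finite rmat) \<Rightarrow> ('n rmat \<Rightarrow> 'n rmat \<Rightarrow> real) \<Rightarrow> 'n rmat \<times> 'n rmat \<Rightarrow> real^'m" where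
  "LderV E F p = Lder E (\<lambda>X. F X (snd p)) (fst p)"

definition LderW :: "('m::finite \<Rightarrow> 'n::finite rmat) \<Rightarrow> ('n rmat \<Rightarrow> 'n rmat \<Rightarrow> real) \<Rightarrow> 'n rmat \<times> 'n rmat \<Rightarrow> real^'m" where
  "LderW E F p = Lder E (F (fst p)) (snd p)"

definition LdiffV_at :: "'n::finite rmat set \<Rightarrow> ('m::finite \<Rightarrow> 'n rmat) \<Rightarrow> ('n rmat \<Rightarrow> 'n rmat \<Rightarrow> real) \<Rightarrow> 'n rmat \<Rightarrow> 'n rmat \<Rightarrow> bool" where
  "LdiffV_at G E F V W \<longleftrightarrow> L_exists E (\<lambda>X. F X W) V \<and>
     continuous (at (V, W) within {(X, Y). X \<in> G \<and> Y \<in> G \<and> L_exists E (\<lambda>Z. F Z Y) X}) (LderV E F)"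

definition LdiffW_at :: "'n::finite rmat set \<Rightarrow> ('m::finite \<Rightarrow> 'n rmat) \<Rightarrow> ('n rmat \<Rightarrow> 'n rmat \<Rightarrow> real) \<Rightarrow> 'n rmat \<Rightarrow> 'n rmat \<Rightarrow> bool" where
  "LdiffW_at G E F V W \<longleftrightarrow> L_exists E (F V) W \<and>
     continuous (at (V, W) within {(X, Y). X \<in> G \<and> Y \<in> G \<and> L_exists E (F X) Y}) (LderW E F)"

definition dirlims_bounded :: "('m::finite \<Rightarrow> 'n::finite rmat) \<Rightarrow> ('n rmat \<Rightarrow> real) \<Rightarrow> 'n rmat \<Rightarrow> bool" where
  "dirlims_bounded E f X \<longleftrightarrow>
     (\<forall>\<zeta>. \<exists>l. (Lquot E f X \<zeta> \<longlongrightarrow> l) (at_right 0)) \<and>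
     (\<exists>C. \<forall>\<zeta>. norm \<zeta> = 1 \<longrightarrow> \<bar>Lim (at_right 0) (Lquot E f X \<zeta>)\<bar> \<le> C)"

definition GG_null :: "'n::finite rmat set \<Rightarrow> ('m::finite \<Rightarrow> 'n rmat) \<Rightarrow> ('n rmat \<times> 'n rmat) set \<Rightarrow> bool" where
  "GG_null G E N \<longleftrightarrow> (\<exists>r>0. \<forall>V\<in>G. \<forall>W\<in>G.
     {p \<in> ball (0 :: (real^'m) \<times> (real^'m)) r. (mexp (Smap E (fst p)) ** V, mexp (Smap E (snd p)) ** W) \<in> N}
       \<in> null_sets lebesgue)"

definition EE_distance :: "'n::finite rmat set \<Rightarrow> ('m::finite \<Rightarrow> 'n rmat) \<Rightarrow> ('n rmat \<Rightarrow> 'n rmat \<Rightarrow> real) \<Rightarrow> bool" where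
  "EE_distance G E Dh \<longleftrightarrow>
     (\<forall>V\<in>G. \<forall>W\<in>G. Dh V W \<ge> 0 \<and> (Dh V W = 0 \<longleftrightarrow> V = W)) \<and>
     GG_null G E {(V, W). V \<in> G \<and> W \<in> G \<and> \<not> (LdiffV_at G E Dh V W \<and> LdiffW_at G E Dh V W)} \<and>
     (\<exists>Dmin>0. \<forall>V\<in>G. \<forall>W\<in>G. 0 < Dh V W \<and> Dh V W < Dmin \<longrightarrow>
        LdiffV_at G E Dh V W \<and> LdiffW_at G E Dh V W) \<and>
     (\<forall>V\<in>G. \<forall>W\<in>G. \<not> L_exists E (\<lambda>X. Dh X W) V \<longrightarrow> dirlims_bounded E (\<lambda>X. Dh X W) V) \<and>
     (\<forall>V\<in>G. \<forall>W\<in>G. \<not> L_exists E (Dh V) W \<longrightarrow> dirlims_bounded E (Dh V) W)"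

definition path_generating :: "'n::finite rmat set \<Rightarrow> (real \<Rightarrow> 'n rmat \<Rightarrow> 'n rmat \<Rightarrow> 'n rmat) \<Rightarrow> bool" where
  "path_generating G \<Phi> \<longleftrightarrow> (\<forall>V\<in>G. \<forall>W\<in>G.
     (\<forall>\<sigma>\<in>{0..1}. \<Phi> \<sigma> V W \<in> G) \<and>
     (\<lambda>\<sigma>. \<Phi> \<sigma> V W) differentiable_on {0..1} \<and>
     \<Phi> 0 V W = V \<and> \<Phi> 1 V W = W)"

definition chainable :: "'n::finite rmat set \<Rightarrow> ('m::finite \<Rightarrow> 'n rmat) \<Rightarrow> ('n rmat \<Rightarrow> 'n rmat \<Rightarrow> real) \<Rightarrow> bool" where
  "chainable G E Dh \<longleftrightarrow> EE_distance G E Dh \<and>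
     (\<exists>\<Phi>. path_generating G \<Phi> \<and>
        (\<forall>V\<in>G. \<forall>W\<in>G. \<forall>\<sigma>\<in>{0..1}. Dh V W = Dh V (\<Phi> \<sigma> V W) + Dh (\<Phi> \<sigma> V W) W))"

text \<open>D(H) = min over s in [0,1]; stated as an infimum, the attainment is an explicit hypothesis.\<close>
definition EC_dist :: "('n::finite rmat \<Rightarrow> 'n rmat \<Rightarrow> real) \<Rightarrow> (real \<Rightarrow> 'n rmat) \<Rightarrow> 'n rmat \<Rightarrow> real" where
  "EC_dist Dh Hd H = (INF s\<in>{0..1}. Dh H (Hd s))"

definition local_min_on :: "'a::topological_space set \<Rightarrow> ('a \<Rightarrow> real) \<Rightarrow> 'a \<Rightarrow> bool" where
  "local_min_on S f x \<longleftrightarrow> x \<in> S \<and> (\<exists>U. open U \<and> x \<in> U \<and> (\<forall>y\<in>U \<inter> S. f x \<le> f y))"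

end

(* Let B be off the curve and W = Hd s a closest curve point. Chainability gives
   Dh P W = Dh B W - Dh B P for every point P = Phi sigma B W of the path from B to W, so
   every such P other than B is strictly closer to the curve than B. The path is continuous
   and leaves B, so such points P exist in every neighbourhood of B: B is no local minimum.
   Points of the curve have EC-distance 0, the global minimum. *)
theory Submission
  imports Defs
begin

lemma connected_continuous_leaves_point:
  fixes P :: "'a::topological_space \<Rightarrow> 'b::t1_space"
  assumes "connected S" "continuous_on S P" "a \<in> S" "b \<in> S" "P b \<noteq> P a"
    and "open U" "P a \<in> U"
  shows "\<exists>x\<in>S. P x \<in> U \<and> P x \<noteq> P a"
proof (rule ccontr)
  assume "\<not> ?thesis"
  then have level_set: "S \<inter> P -` U = {x \<in> S. P x = P a}"
    using \<open>P a \<in> U\<close> by auto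
  have "openin (top_of_set S) {x \<in> S. P x = P a}"
    using continuous_openin_preimage_gen[OF assms(2,6)] unfolding level_set .
  moreover have "closedin (top_of_set S) {x \<in> S. P x = P a}"
    using assms(2) by (rule continuous_closedin_preimage_constant)
  ultimately have "{x \<in> S. P x = P a} = S"
    using \<open>connected S\<close> \<open>a \<in> S\<close> unfolding connected_clopen by blast
  then show False
    using \<open>b \<in> S\<close> \<open>P b \<noteq> P a\<close> by blast
qed

lemma EC_dist_le:
  assumes "\<forall>t\<in>{0..1}. 0 \<le> Dh H (Hd t)" "s \<in> {0..1}"
  shows "EC_dist Dh Hd H \<le> Dh H (Hd s)"
  unfolding EC_dist_def using assms by (intro cINF_lower bdd_belowI2) auto

lemma EC_dist_nonneg:
  assumes "\<forall>t\<in>{0..1}. 0 \<le> Dh H (Hd t)"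
  shows "0 \<le> EC_dist Dh Hd H"
  unfolding EC_dist_def using assms by (intro cINF_greatest) auto

lemma EC_dist_eq_attained_min:
  assumes "s \<in> {0..1}" "\<forall>t\<in>{0..1}. Dh H (Hd s) \<le> Dh H (Hd t)"
  shows "EC_dist Dh Hd H = Dh H (Hd s)"
  unfolding EC_dist_def using assms
  by (intro antisym cINF_lower cINF_greatest bdd_belowI2) auto

lemma EE_distance_nonneg: "EE_distance G E Dh \<Longrightarrow> V \<in> G \<Longrightarrow> W \<in> G \<Longrightarrow> 0 \<le> Dh V W"
  unfolding EE_distance_def by blast

lemma EE_distance_eq_0_iff: "EE_distance G E Dh \<Longrightarrow> V \<in> G \<Longrightarrow> W \<in> G \<Longrightarrow> Dh V W = 0 \<longleftrightarrow> V = W"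
  unfolding EE_distance_def by blast

lemma chainable_imp_EE_distance: "chainable G E Dh \<Longrightarrow> EE_distance G E Dh"
  unfolding chainable_def by blast

lemma chainableE:
  assumes "chainable G E Dh"
  obtains \<Phi> where "path_generating G \<Phi>"
    and "\<And>V W \<sigma>. V \<in> G \<Longrightarrow> W \<in> G \<Longrightarrow> \<sigma> \<in> {0..1} \<Longrightarrow>
           Dh V W = Dh V (\<Phi> \<sigma> V W) + Dh (\<Phi> \<sigma> V W) W"
  using assms unfolding chainable_def by blast

lemma path_generatingD:
  assumes "path_generating G \<Phi>" "V \<in> G" "W \<in> G"
  shows "\<forall>\<sigma>\<in>{0..1}. \<Phi> \<sigma> V W \<in> G" "continuous_on {0..1} (\<lambda>\<sigma>. \<Phi> \<sigma> V W)"
    and "\<Phi> 0 V W = V" "\<Phi> 1 V W = W"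
  using assms differentiable_imp_continuous_on unfolding path_generating_def by blast+

lemma chainable_EC_dist_descent:
  assumes chain: "chainable G E Dh"
    and Hd: "\<forall>t\<in>{0..1}. Hd t \<in> G"
    and B: "B \<in> G" "B \<notin> Hd ` {0..1}"
    and s: "s \<in> {0..1}" "\<forall>t\<in>{0..1}. Dh B (Hd s) \<le> Dh B (Hd t)"
    and U: "open U" "B \<in> U"
  shows "\<exists>H\<in>U \<inter> G. EC_dist Dh Hd H < EC_dist Dh Hd B"
proof -
  have EE: "EE_distance G E Dh"
    using chain by (rule chainable_imp_EE_distance)
  obtain \<Phi> where \<Phi>: "path_generating G \<Phi>"
    and split: "\<And>V W \<sigma>. V \<in> G \<Longrightarrow> W \<in> G \<Longrightarrow> \<sigma> \<in> {0..1} \<Longrightarrow>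
                  Dh V W = Dh V (\<Phi> \<sigma> V W) + Dh (\<Phi> \<sigma> V W) W"
    using chainableE[OF chain] by blast
  define W where "W = Hd s"
  have W: "W \<in> G" "W \<noteq> B"
    using Hd B s unfolding W_def by auto
  note path = path_generatingD[OF \<Phi> B(1) W(1)]
  obtain \<sigma> where \<sigma>: "\<sigma> \<in> {0..1}" "\<Phi> \<sigma> B W \<in> U" "\<Phi> \<sigma> B W \<noteq> B"
    using connected_continuous_leaves_point[of "{0..1}" "\<lambda>\<sigma>. \<Phi> \<sigma> B W" 0 1 U]
      path(2-4) W(2) U by auto
  define H where "H = \<Phi> \<sigma> B W"
  have H: "H \<in> G"
    using path(1) \<sigma>(1) unfolding H_def by blast
  have "EC_dist Dh Hd H \<le> Dh H W"
    unfolding W_def using EC_dist_le EE_distance_nonneg[OF EE H] Hd s(1) by blast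
  also have "\<dots> = Dh B W - Dh B H"
    using split[OF B(1) W(1) \<sigma>(1)] unfolding H_def by simp
  also have "\<dots> < Dh B W"
    using EE_distance_nonneg[OF EE B(1) H] EE_distance_eq_0_iff[OF EE B(1) H] \<sigma>(3)
    unfolding H_def by auto
  also have "\<dots> = EC_dist Dh Hd B"
    unfolding W_def using EC_dist_eq_attained_min[where Dh = Dh and Hd = Hd, OF s] by simp
  finally show ?thesis
    using H \<sigma>(2) unfolding H_def by blast
qed

lemma EC_dist_on_curve:
  assumes "EE_distance G E Dh" "\<forall>t\<in>{0..1}. Hd t \<in> G" "t \<in> {0..1}"
  shows "EC_dist Dh Hd (Hd t) = 0"
proof (rule antisym)
  have curve_G: "Hd t \<in> G"
    using assms(2,3) by blast
  have nonneg: "\<forall>t'\<in>{0..1}. 0 \<le> Dh (Hd t) (Hd t')"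
    using assms(2) EE_distance_nonneg[OF assms(1) curve_G] by blast
  have "EC_dist Dh Hd (Hd t) \<le> Dh (Hd t) (Hd t)"
    using nonneg assms(3) by (rule EC_dist_le)
  then show "EC_dist Dh Hd (Hd t) \<le> 0"
    using EE_distance_eq_0_iff[OF assms(1) curve_G curve_G] by simp
  show "0 \<le> EC_dist Dh Hd (Hd t)"
    using nonneg by (rule EC_dist_nonneg)
qed

lemma chainable_local_min_EC_dist_on_curve:
  assumes chain: "chainable G E Dh"
    and Hd: "\<forall>t\<in>{0..1}. Hd t \<in> G"
    and min_exists: "\<forall>H\<in>G. \<exists>s\<in>{0..1}. \<forall>t\<in>{0..1}. Dh H (Hd s) \<le> Dh H (Hd t)"
    and min: "local_min_on G (EC_dist Dh Hd) B"
  shows "B \<in> Hd ` {0..1}"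
proof (rule ccontr)
  assume off: "B \<notin> Hd ` {0..1}"
  obtain U where U: "open U" "B \<in> U" "\<forall>H\<in>U \<inter> G. EC_dist Dh Hd B \<le> EC_dist Dh Hd H"
    and B: "B \<in> G"
    using min unfolding local_min_on_def by blast
  obtain s where s: "s \<in> {0..1}" "\<forall>t\<in>{0..1}. Dh B (Hd s) \<le> Dh B (Hd t)"
    using min_exists B by blast
  obtain H where H: "H \<in> U \<inter> G" "EC_dist Dh Hd H < EC_dist Dh Hd B"
    using chainable_EC_dist_descent[OF chain Hd B off s U(1,2)] by blast
  have "EC_dist Dh Hd B \<le> EC_dist Dh Hd H"
    using U(3) H(1) by blast
  with H(2) show False
    by linarith
qed

lemma EC_dist_on_curve_le:
  assumes EE: "EE_distance G E Dh" and Hd: "\<forall>t\<in>{0..1}. Hd t \<in> G"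
    and "t \<in> {0..1}" "H \<in> G"
  shows "EC_dist Dh Hd (Hd t) \<le> EC_dist Dh Hd H"
proof -
  have "EC_dist Dh Hd (Hd t) = 0"
    using EE Hd \<open>t \<in> {0..1}\<close> by (rule EC_dist_on_curve)
  moreover have "0 \<le> EC_dist Dh Hd H"
    using Hd EE_distance_nonneg[OF EE \<open>H \<in> G\<close>] by (intro EC_dist_nonneg) blast
  ultimately show ?thesis
    by simp
qed

theorem proposition2:
  fixes G :: "(real^'n^'n) set"
    and E :: "'m::finite \<Rightarrow> real^'n^'n"
    and Dh :: "real^'n^'n \<Rightarrow> real^'n^'n \<Rightarrow> real"
    and Hd :: "real \<Rightarrow> real^'n^'n"
  assumes G: "matrix_lie_group G" "connected G"
    and E: "lie_basis G E"
    and Hd: "Hd differentiable_on {0..1}" "\<forall>s\<in>{0..1}. Hd s \<in> G" "inj_on Hd {0..1}"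
    and min_exists: "\<forall>H\<in>G. \<exists>s\<in>{0..1}. \<forall>t\<in>{0..1}. Dh H (Hd s) \<le> Dh H (Hd t)"
    and chain: "chainable G E Dh"
  shows "(\<forall>B. local_min_on G (EC_dist Dh Hd) B \<longrightarrow> B \<in> Hd ` {0..1}) \<and>
         (\<forall>B. local_min_on G (EC_dist Dh Hd) B \<longrightarrow> (\<forall>H\<in>G. EC_dist Dh Hd B \<le> EC_dist Dh Hd H))"
proof -
  have on_curve: "B \<in> Hd ` {0..1}" if "local_min_on G (EC_dist Dh Hd) B" for B
    using chain Hd(2) min_exists that by (rule chainable_local_min_EC_dist_on_curve)
  moreover have "EC_dist Dh Hd B \<le> EC_dist Dh Hd H"
    if "local_min_on G (EC_dist Dh Hd) B" "H \<in> G" for B H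
    using on_curve[OF that(1)] EC_dist_on_curve_le[OF chainable_imp_EE_distance[OF chain] Hd(2) _ that(2)]
    by blast
  ultimately show ?thesis
    by blast
qed

end
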